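(* Let $|\Psi_{in}\rangle=\frac1{\sqrt d}\sum_{i=1}^d|A_i\rangle|B_i\rangle$ with orthonormal sets $\{|A_i\rangle\}\subset\mathcal H_A$, $\{|B_i\rangle\}\subset\mathcal H_B$, and $|\Psi_{out}\rangle=\frac1{\sqrt d}\sum_{i=1}^d|a_i\rangle|b_i\rangle$ with orthonormal bases $\{|a_i\rangle\}$ of $\mathcal H_a$ and $\{|b_i\rangle\}$ of $\mathcal H_b$, $\dim\mathcal H_a=\dim\mathcal H_b=d$. Let $E_k:\mathcal H_A\to\mathcal H_a$ and $F_k:\mathcal H_B\to\mathcal H_b$ be linear operators with $\sum_k E_k^\dagger E_k\otimes F_k^\dagger F_k=\mathbb I_{AB}$ and $(E_k\otimes F_k)|\Psi_{in}\rangle=\sqrt{p_k}|\Psi_{out}\rangle$ for all $k$, where $p_k\ge0$. Then for every $k$ with $p_k\neq0$ there exist $\alpha_k>0$ and a $d\times d$ unitary matrix $U_k^M$ such that $E_k^M=\alpha_kU_k^M$ and $F_k^M=\frac{\sqrt{p_k}}{\alpha_k}\overline{U_k^M}$, where $(E_k^M)_{ij}=\langle a_i|E_k|A_j\rangle$, $(F_k^M)_{ij}=\langle b_i|F_k|B_j\rangle$ and the bar denotes entrywise complex conjugation.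
   Context: All Hilbert spaces are finite-dimensional; $\dim\mathcal H_A,\dim\mathcal H_B\ge d$. *)

theory Defs
  imports "Jordan_Normal_Form.Matrix" "Jordan_Normal_Form.Schur_Decomposition"
begin

text \<open>Finite-dimensional Hilbert spaces are modelled as coordinate spaces complex^n
  with the standard inner product; tensor products as Kronecker products.\<close>

definition braket :: "complex vec \<Rightarrow> complex vec \<Rightarrow> complex" where
  "braket u v = (\<Sum>i<dim_vec v. cnj (u $ i) * v $ i)"

definition orthonormal_family :: "nat \<Rightarrow> nat \<Rightarrow> (nat \<Rightarrow> complex vec) \<Rightarrow> bool" where
  "orthonormal_family n d v \<longleftrightarrow> (\<forall>i<d. v i \<in> carrier_vec n) \<and>
     (\<forall>i<d. \<forall>j<d. braket (v i) (v j) = (if i = j then 1 else 0))"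

definition kron_vec :: "complex vec \<Rightarrow> complex vec \<Rightarrow> complex vec" where
  "kron_vec u v = vec (dim_vec u * dim_vec v)
     (\<lambda>r. u $ (r div dim_vec v) * v $ (r mod dim_vec v))"

definition kron :: "complex mat \<Rightarrow> complex mat \<Rightarrow> complex mat" where
  "kron M N = mat (dim_row M * dim_row N) (dim_col M * dim_col N)
     (\<lambda>(r, c). M $$ (r div dim_row N, c div dim_col N) * N $$ (r mod dim_row N, c mod dim_col N))"

definition unitary_mat :: "nat \<Rightarrow> complex mat \<Rightarrow> bool" where
  "unitary_mat n U \<longleftrightarrow> U \<in> carrier_mat n n \<and>
     U * mat_adjoint U = 1\<^sub>m n \<and> mat_adjoint U * U = 1\<^sub>m n"

definition max_ent :: "nat \<Rightarrow> nat \<Rightarrow> nat \<Rightarrow> (nat \<Rightarrow> complex vec) \<Rightarrow> (nat \<Rightarrow> complex vec) \<Rightarrow> complex vec" where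
  "max_ent n m d v w = vec (n * m)
     (\<lambda>r. complex_of_real (1 / sqrt (real d)) * (\<Sum>i<d. kron_vec (v i) (w i) $ r))"

definition op_matrix :: "nat \<Rightarrow> (nat \<Rightarrow> complex vec) \<Rightarrow> complex mat \<Rightarrow> (nat \<Rightarrow> complex vec) \<Rightarrow> complex mat" where
  "op_matrix d out M inp = mat d d (\<lambda>(i, j). braket (out i) (M *\<^sub>v inp j))"

end

theory Submission
  imports Defs
begin

text \<open>Write \<open>M\<^sub>k\<close>, \<open>N\<^sub>k\<close> for the matrices of \<open>E\<^sub>k\<close>, \<open>F\<^sub>k\<close>. Pairing the output condition with
  \<open>|a\<^sub>i\<rangle>|b\<^sub>l\<rangle>\<close> gives \<open>M\<^sub>k N\<^sub>k\<^sup>T = \<surd>p\<^sub>k \<one>\<close>, and reading the completeness relation in the product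
  basis \<open>|A\<^sub>j\<rangle>|B\<^sub>l\<rangle>\<close> gives \<open>\<Sum>\<^sub>k (M\<^sub>k\<^sup>\<dagger>M\<^sub>k)\<^sub>j\<^sub>j\<^sub>' (N\<^sub>k\<^sup>\<dagger>N\<^sub>k)\<^sub>l\<^sub>l\<^sub>' = \<delta>\<^sub>j\<^sub>j\<^sub>' \<delta>\<^sub>l\<^sub>l\<^sub>'\<close>.
  Contracting the latter in two ways yields \<open>\<Sum>\<^sub>k p\<^sub>k = 1\<close> and
  \<open>\<Sum>\<^sub>k \<parallel>M\<^sub>k\<parallel>\<^sup>2 \<parallel>N\<^sub>k\<parallel>\<^sup>2 = d\<^sup>2\<close> (Frobenius norms), while Cauchy--Schwarz applied to
  \<open>tr (M\<^sub>k N\<^sub>k\<^sup>T) = d \<surd>p\<^sub>k\<close> gives \<open>\<parallel>M\<^sub>k\<parallel>\<^sup>2 \<parallel>N\<^sub>k\<parallel>\<^sup>2 \<ge> d\<^sup>2 p\<^sub>k\<close>. So every one of these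
  Cauchy--Schwarz inequalities is an equality: \<open>N\<^sub>k\<close> is a positive multiple of \<open>conj M\<^sub>k\<close>, hence
  \<open>M\<^sub>k M\<^sub>k\<^sup>\<dagger>\<close> is a positive multiple of \<open>\<one>\<close> and \<open>M\<^sub>k\<close> is a scaled unitary.\<close>

lemma sum_lessThan_mult_div_mod:
  fixes f :: "nat \<Rightarrow> nat \<Rightarrow> 'b::comm_monoid_add"
  shows "(\<Sum>c<n * m. f (c div m) (c mod m)) = (\<Sum>a<n. \<Sum>b<m. f a b)"
proof -
  have lt: "a * m + b < n * m" if "a < n" "b < m" for a b
  proof -
    have "a * m + b < (a + 1) * m" using that by simp
    also have "\<dots> \<le> n * m" using that by (intro mult_right_mono) auto
    finally show ?thesis .
  qed
  have dm: "c div m < n \<and> c mod m < m" if "c < n * m" for c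
  proof -
    have "m > 0" using that by (cases m) auto
    then show ?thesis using that by (auto simp: less_mult_imp_div_less)
  qed
  have "(\<Sum>a<n. \<Sum>b<m. f a b) = (\<Sum>(a, b)\<in>{..<n} \<times> {..<m}. f a b)"
    by (simp add: sum.cartesian_product)
  also have "\<dots> = (\<Sum>c<n * m. f (c div m) (c mod m))"
    by (rule sum.reindex_bij_witness[where i="\<lambda>c. (c div m, c mod m)" and j="\<lambda>(a, b). a * m + b"])
      (use lt dm in auto)
  finally show ?thesis by simp
qed

lemma dim_mat_adjoint [simp]:
  "dim_row (mat_adjoint M) = dim_col M" "dim_col (mat_adjoint M) = dim_row M"
  unfolding mat_adjoint_def by simp_all

lemma index_mat_adjoint [simp]:
  "i < dim_col M \<Longrightarrow> j < dim_row M \<Longrightarrow> mat_adjoint M $$ (i, j) = cnj (M $$ (j, i))"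
  unfolding mat_adjoint_def by (simp add: mat_of_rows_index)

lemma mat_adjoint_carrier_mat: "M \<in> carrier_mat n m \<Longrightarrow> mat_adjoint M \<in> carrier_mat m n"
  unfolding carrier_mat_def by simp

abbreviation gram_mat :: "complex mat \<Rightarrow> complex mat" where
  "gram_mat M \<equiv> mat_adjoint M * M"

lemma gram_mat_carrier_mat: "M \<in> carrier_mat n m \<Longrightarrow> gram_mat M \<in> carrier_mat m m"
  by (auto intro: mat_adjoint_carrier_mat)

lemma index_mult_mat_vec_sum:
  assumes "M \<in> carrier_mat n m" and "v \<in> carrier_vec m" and "i < n"
  shows "(M *\<^sub>v v) $ i = (\<Sum>c<m. M $$ (i, c) * v $ c)"
  using assms by (auto simp: scalar_prod_def atLeast0LessThan intro!: sum.cong)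

lemma index_mult_mat_sum:
  assumes "M \<in> carrier_mat n m" and "N \<in> carrier_mat m q" and "i < n" and "j < q"
  shows "(M * N) $$ (i, j) = (\<Sum>r<m. M $$ (i, r) * N $$ (r, j))"
  using assms by (auto simp: scalar_prod_def atLeast0LessThan intro!: sum.cong)

lemma braket_carrier_vec: "v \<in> carrier_vec n \<Longrightarrow> braket u v = (\<Sum>r<n. cnj (u $ r) * v $ r)"
  unfolding braket_def carrier_vec_def by simp

lemma braket_smult_right: "braket u (c \<cdot>\<^sub>v v) = c * braket u v"
  unfolding braket_def by (simp add: sum_distrib_left mult_ac)

lemma braket_mat_adjoint:
  assumes M: "M \<in> carrier_mat m n" and u: "u \<in> carrier_vec n" and w: "w \<in> carrier_vec m"
  shows "braket u (mat_adjoint M *\<^sub>v w) = braket (M *\<^sub>v u) w"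
proof -
  have "braket u (mat_adjoint M *\<^sub>v w) = (\<Sum>i<n. cnj (u $ i) * (\<Sum>r<m. cnj (M $$ (r, i)) * w $ r))"
    unfolding braket_def using M index_mult_mat_vec_sum[OF mat_adjoint_carrier_mat[OF M] w]
    by (intro sum.cong) auto
  also have "\<dots> = (\<Sum>r<m. cnj (\<Sum>i<n. M $$ (r, i) * u $ i) * w $ r)"
    by (simp add: sum_distrib_left sum_distrib_right mult_ac sum.swap[of _ "{..<m}"])
  also have "\<dots> = braket (M *\<^sub>v u) w"
    unfolding braket_def using M w index_mult_mat_vec_sum[OF M u] by (intro sum.cong) auto
  finally show ?thesis .
qed

lemma braket_mat_sum:
  assumes "finite K" and G: "\<And>k. k \<in> K \<Longrightarrow> G k \<in> carrier_mat n n"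
    and u: "u \<in> carrier_vec n" and v: "v \<in> carrier_vec n"
  shows "braket u (mat n n (\<lambda>(r, c). \<Sum>k\<in>K. G k $$ (r, c)) *\<^sub>v v) = (\<Sum>k\<in>K. braket u (G k *\<^sub>v v))"
proof -
  have sum_G: "mat n n (\<lambda>(r, c). \<Sum>k\<in>K. G k $$ (r, c)) \<in> carrier_mat n n" by simp
  have "braket u (mat n n (\<lambda>(r, c). \<Sum>k\<in>K. G k $$ (r, c)) *\<^sub>v v) =
      (\<Sum>r<n. cnj (u $ r) * (\<Sum>c<n. (\<Sum>k\<in>K. G k $$ (r, c)) * v $ c))"
    unfolding braket_def using index_mult_mat_vec_sum[OF sum_G v] by (intro sum.cong) auto
  also have "\<dots> = (\<Sum>k\<in>K. \<Sum>r<n. cnj (u $ r) * (\<Sum>c<n. G k $$ (r, c) * v $ c))"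
    by (simp add: sum_distrib_left sum_distrib_right mult_ac sum.swap[of _ K])
  also have "\<dots> = (\<Sum>k\<in>K. braket u (G k *\<^sub>v v))"
  proof (rule sum.cong[OF refl])
    fix k assume "k \<in> K"
    then show "(\<Sum>r<n. cnj (u $ r) * (\<Sum>c<n. G k $$ (r, c) * v $ c)) = braket u (G k *\<^sub>v v)"
      using G[OF \<open>k \<in> K\<close>] v braket_carrier_vec[of "G k *\<^sub>v v" n u]
      by (simp add: index_mult_mat_vec_sum del: index_mult_mat_vec)
  qed
  finally show ?thesis .
qed

section \<open>Kronecker products and maximally entangled vectors\<close>

lemma kron_vec_carrier_vec:
  "u \<in> carrier_vec n \<Longrightarrow> v \<in> carrier_vec m \<Longrightarrow> kron_vec u v \<in> carrier_vec (n * m)"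
  unfolding carrier_vec_def kron_vec_def by simp

lemma kron_carrier_mat:
  "M \<in> carrier_mat p n \<Longrightarrow> N \<in> carrier_mat q m \<Longrightarrow> kron M N \<in> carrier_mat (p * q) (n * m)"
  unfolding carrier_mat_def kron_def by simp

lemma kron_mult_kron_vec:
  assumes M: "M \<in> carrier_mat p n" and N: "N \<in> carrier_mat q m"
    and u: "u \<in> carrier_vec n" and v: "v \<in> carrier_vec m"
  shows "kron M N *\<^sub>v kron_vec u v = kron_vec (M *\<^sub>v u) (N *\<^sub>v v)"
proof (rule eq_vecI)
  show "dim_vec (kron M N *\<^sub>v kron_vec u v) = dim_vec (kron_vec (M *\<^sub>v u) (N *\<^sub>v v))"
    using M N by (simp add: kron_def kron_vec_def)
  fix r assume "r < dim_vec (kron_vec (M *\<^sub>v u) (N *\<^sub>v v))"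
  then have r: "r < p * q" using M N by (simp add: kron_vec_def)
  then have "q > 0" by (cases q) auto
  then have r_div: "r div q < p" and r_mod: "r mod q < q" using r by (auto simp: less_mult_imp_div_less)
  have "(kron M N *\<^sub>v kron_vec u v) $ r = (\<Sum>c<n * m. kron M N $$ (r, c) * kron_vec u v $ c)"
    by (rule index_mult_mat_vec_sum[OF kron_carrier_mat[OF M N] kron_vec_carrier_vec[OF u v] r])
  also have "\<dots> = (\<Sum>c<n * m. (M $$ (r div q, c div m) * u $ (c div m)) * (N $$ (r mod q, c mod m) * v $ (c mod m)))"
  proof (rule sum.cong[OF refl])
    fix c assume c: "c \<in> {..<n * m}"
    then have "m > 0" by (cases m) auto
    then show "kron M N $$ (r, c) * kron_vec u v $ c =
        (M $$ (r div q, c div m) * u $ (c div m)) * (N $$ (r mod q, c mod m) * v $ (c mod m))"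
      using M N u v r c by (simp add: kron_def kron_vec_def less_mult_imp_div_less)
  qed
  also have "\<dots> = (\<Sum>a<n. \<Sum>b<m. (M $$ (r div q, a) * u $ a) * (N $$ (r mod q, b) * v $ b))"
    by (rule sum_lessThan_mult_div_mod)
  also have "\<dots> = (\<Sum>a<n. M $$ (r div q, a) * u $ a) * (\<Sum>b<m. N $$ (r mod q, b) * v $ b)"
    by (simp add: sum_product)
  also have "\<dots> = kron_vec (M *\<^sub>v u) (N *\<^sub>v v) $ r"
    using M N r index_mult_mat_vec_sum[OF M u r_div] index_mult_mat_vec_sum[OF N v r_mod]
    by (simp add: kron_vec_def)
  finally show "(kron M N *\<^sub>v kron_vec u v) $ r = kron_vec (M *\<^sub>v u) (N *\<^sub>v v) $ r" .
qed

lemma braket_kron_vec: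
  assumes "x \<in> carrier_vec n" and u: "u \<in> carrier_vec n"
    and "y \<in> carrier_vec m" and v: "v \<in> carrier_vec m"
  shows "braket (kron_vec x y) (kron_vec u v) = braket x u * braket y v"
proof -
  have "braket (kron_vec x y) (kron_vec u v) =
      (\<Sum>c<n * m. (cnj (x $ (c div m)) * u $ (c div m)) * (cnj (y $ (c mod m)) * v $ (c mod m)))"
    unfolding braket_def using assms by (intro sum.cong) (auto simp: kron_vec_def)
  also have "\<dots> = (\<Sum>a<n. \<Sum>b<m. (cnj (x $ a) * u $ a) * (cnj (y $ b) * v $ b))"
    by (rule sum_lessThan_mult_div_mod)
  also have "\<dots> = braket x u * braket y v"
    using u v by (simp add: braket_carrier_vec sum_product)
  finally show ?thesis .
qed

lemma dim_max_ent [simp]: "dim_vec (max_ent n m d v w) = n * m"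
  unfolding max_ent_def by simp

lemma index_max_ent:
  "r < n * m \<Longrightarrow> max_ent n m d v w $ r = complex_of_real (1 / sqrt (real d)) * (\<Sum>i<d. kron_vec (v i) (w i) $ r)"
  unfolding max_ent_def by simp

lemma kron_mult_max_ent:
  assumes M: "M \<in> carrier_mat p n" and N: "N \<in> carrier_mat q m"
    and v: "\<And>j. j < d \<Longrightarrow> v j \<in> carrier_vec n" and w: "\<And>j. j < d \<Longrightarrow> w j \<in> carrier_vec m"
  shows "kron M N *\<^sub>v max_ent n m d v w = max_ent p q d (\<lambda>j. M *\<^sub>v v j) (\<lambda>j. N *\<^sub>v w j)"
proof (rule eq_vecI)
  show "dim_vec (kron M N *\<^sub>v max_ent n m d v w) = dim_vec (max_ent p q d (\<lambda>j. M *\<^sub>v v j) (\<lambda>j. N *\<^sub>v w j))"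
    using kron_carrier_mat[OF M N] by simp
  fix r assume "r < dim_vec (max_ent p q d (\<lambda>j. M *\<^sub>v v j) (\<lambda>j. N *\<^sub>v w j))"
  then have r: "r < p * q" by simp
  let ?s = "complex_of_real (1 / sqrt (real d))"
  have MN: "kron M N \<in> carrier_mat (p * q) (n * m)" by (rule kron_carrier_mat[OF M N])
  have max_ent: "max_ent n m d v w \<in> carrier_vec (n * m)"
    unfolding carrier_vec_def by simp
  have "(kron M N *\<^sub>v max_ent n m d v w) $ r = (\<Sum>c<n * m. kron M N $$ (r, c) * max_ent n m d v w $ c)"
    by (rule index_mult_mat_vec_sum[OF MN max_ent r])
  also have "\<dots> = (\<Sum>c<n * m. kron M N $$ (r, c) * (?s * (\<Sum>j<d. kron_vec (v j) (w j) $ c)))"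
    by (intro sum.cong) (auto simp: index_max_ent)
  also have "\<dots> = ?s * (\<Sum>j<d. \<Sum>c<n * m. kron M N $$ (r, c) * kron_vec (v j) (w j) $ c)"
    by (simp add: sum_distrib_left sum_distrib_right mult_ac sum.swap[of _ "{..<d}"])
  also have "\<dots> = ?s * (\<Sum>j<d. kron_vec (M *\<^sub>v v j) (N *\<^sub>v w j) $ r)"
  proof -
    have "(\<Sum>c<n * m. kron M N $$ (r, c) * kron_vec (v j) (w j) $ c) = kron_vec (M *\<^sub>v v j) (N *\<^sub>v w j) $ r"
      if "j < d" for j
      using index_mult_mat_vec_sum[OF MN kron_vec_carrier_vec[OF v w] r, symmetric]
        kron_mult_kron_vec[OF M N v w] that by simp
    then show ?thesis by simp
  qed
  also have "\<dots> = max_ent p q d (\<lambda>j. M *\<^sub>v v j) (\<lambda>j. N *\<^sub>v w j) $ r"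
    using r by (simp add: index_max_ent)
  finally show "(kron M N *\<^sub>v max_ent n m d v w) $ r = max_ent p q d (\<lambda>j. M *\<^sub>v v j) (\<lambda>j. N *\<^sub>v w j) $ r" .
qed

lemma braket_max_ent:
  assumes v: "\<And>j. j < d \<Longrightarrow> v j \<in> carrier_vec n" and w: "\<And>j. j < d \<Longrightarrow> w j \<in> carrier_vec m"
  shows "braket z (max_ent n m d v w) =
    complex_of_real (1 / sqrt (real d)) * (\<Sum>j<d. braket z (kron_vec (v j) (w j)))"
proof -
  let ?s = "complex_of_real (1 / sqrt (real d))"
  have "braket z (max_ent n m d v w) = (\<Sum>r<n * m. cnj (z $ r) * (?s * (\<Sum>j<d. kron_vec (v j) (w j) $ r)))"
    unfolding braket_def by (intro sum.cong) (auto simp: index_max_ent)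
  also have "\<dots> = ?s * (\<Sum>j<d. \<Sum>r<n * m. cnj (z $ r) * kron_vec (v j) (w j) $ r)"
    by (simp add: sum_distrib_left sum_distrib_right mult_ac sum.swap[of _ "{..<d}"])
  also have "\<dots> = ?s * (\<Sum>j<d. braket z (kron_vec (v j) (w j)))"
    using braket_carrier_vec[OF kron_vec_carrier_vec[OF v w]] by simp
  finally show ?thesis .
qed

lemma braket_kron_vec_max_ent:
  assumes u: "u \<in> carrier_vec n" and w: "w \<in> carrier_vec m"
    and v: "\<And>j. j < d \<Longrightarrow> v j \<in> carrier_vec n" and v': "\<And>j. j < d \<Longrightarrow> v' j \<in> carrier_vec m"
  shows "braket (kron_vec u w) (max_ent n m d v v') =
    complex_of_real (1 / sqrt (real d)) * (\<Sum>j<d. braket u (v j) * braket w (v' j))"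
  using braket_max_ent[where d=d and v=v and w=v', OF v v'] braket_kron_vec[OF u v w v'] by simp

lemma orthonormal_family_carrier_vec:
  "orthonormal_family n d v \<Longrightarrow> i < d \<Longrightarrow> v i \<in> carrier_vec n"
  unfolding orthonormal_family_def by blast

lemma orthonormal_family_braket:
  "orthonormal_family n d v \<Longrightarrow> i < d \<Longrightarrow> j < d \<Longrightarrow> braket (v i) (v j) = (if i = j then 1 else 0)"
  unfolding orthonormal_family_def by blast

text \<open>An orthonormal family of \<open>d\<close> vectors in \<open>\<complex>\<^sup>d\<close> is the column set of a unitary matrix,
  whose rows are then orthonormal as well.\<close>

lemma orthonormal_basis_completeness:
  assumes a: "orthonormal_family d d a" and "r < d" and "s < d"
  shows "(\<Sum>i<d. a i $ r * cnj (a i $ s)) = (if r = s then 1 else 0)"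
proof -
  define C where "C = mat d d (\<lambda>(r, i). a i $ r)"
  have C: "C \<in> carrier_mat d d" unfolding C_def by simp
  have "mat_adjoint C * C = 1\<^sub>m d"
  proof (rule eq_matI)
    fix i j assume "i < dim_row (1\<^sub>m d)" and "j < dim_col (1\<^sub>m d)"
    then have i: "i < d" and j: "j < d" by auto
    have "(mat_adjoint C * C) $$ (i, j) = (\<Sum>r<d. cnj (a i $ r) * a j $ r)"
      using index_mult_mat_sum[OF mat_adjoint_carrier_mat[OF C] C i j] C i j by (simp add: C_def)
    also have "\<dots> = braket (a i) (a j)"
      using braket_carrier_vec[OF orthonormal_family_carrier_vec[OF a j]] by simp
    finally show "(mat_adjoint C * C) $$ (i, j) = 1\<^sub>m d $$ (i, j)"
      using orthonormal_family_braket[OF a i j] i j by simp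
  qed (use C in auto)
  then have "C * mat_adjoint C = 1\<^sub>m d"
    by (rule mat_mult_left_right_inverse[OF mat_adjoint_carrier_mat[OF C] C])
  then have "(C * mat_adjoint C) $$ (r, s) = (if r = s then 1 else 0)"
    using assms by simp
  then show ?thesis
    using index_mult_mat_sum[OF C mat_adjoint_carrier_mat[OF C] assms(2,3)] C assms
    by (simp add: C_def)
qed

lemma orthonormal_basis_parseval:
  assumes a: "orthonormal_family d d a" and u: "u \<in> carrier_vec d" and v: "v \<in> carrier_vec d"
  shows "braket u v = (\<Sum>i<d. cnj (braket (a i) u) * braket (a i) v)"
proof -
  have "(\<Sum>i<d. cnj (braket (a i) u) * braket (a i) v) =
      (\<Sum>i<d. (\<Sum>r<d. a i $ r * cnj (u $ r)) * (\<Sum>s<d. cnj (a i $ s) * v $ s))"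
    unfolding braket_def using u v orthonormal_family_carrier_vec[OF a] by (intro sum.cong) auto
  also have "\<dots> = (\<Sum>i<d. \<Sum>r<d. \<Sum>s<d. (a i $ r * cnj (u $ r)) * (cnj (a i $ s) * v $ s))"
    by (simp add: sum_product)
  also have "\<dots> = (\<Sum>r<d. \<Sum>s<d. \<Sum>i<d. (a i $ r * cnj (u $ r)) * (cnj (a i $ s) * v $ s))"
    by (subst sum.swap) (intro sum.cong refl sum.swap)
  also have "\<dots> = (\<Sum>r<d. \<Sum>s<d. cnj (u $ r) * v $ s * (\<Sum>i<d. a i $ r * cnj (a i $ s)))"
    by (intro sum.cong refl) (simp add: sum_distrib_left mult_ac)
  also have "\<dots> = (\<Sum>r<d. \<Sum>s<d. cnj (u $ r) * v $ s * (if r = s then 1 else 0))"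
    by (intro sum.cong refl) (simp add: orthonormal_basis_completeness[OF a])
  also have "\<dots> = braket u v"
    using v by (simp add: braket_carrier_vec if_distrib cong: if_cong)
  finally show ?thesis by simp
qed

lemma dim_op_matrix [simp]:
  "dim_row (op_matrix d out M inp) = d" "dim_col (op_matrix d out M inp) = d"
  unfolding op_matrix_def by simp_all

lemma op_matrix_carrier_mat: "op_matrix d out M inp \<in> carrier_mat d d"
  unfolding carrier_mat_def by simp

lemma index_op_matrix:
  "i < d \<Longrightarrow> j < d \<Longrightarrow> op_matrix d out M inp $$ (i, j) = braket (out i) (M *\<^sub>v inp j)"
  unfolding op_matrix_def by simp

lemma mat_adjoint_mult_op_matrix:
  assumes a: "orthonormal_family d d a" and M: "M \<in> carrier_mat d n"
    and A: "\<And>j. j < d \<Longrightarrow> A j \<in> carrier_vec n" and j: "j < d" and j': "j' < d"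
  shows "(mat_adjoint (op_matrix d a M A) * op_matrix d a M A) $$ (j, j') =
    braket (A j) ((mat_adjoint M * M) *\<^sub>v A j')"
proof -
  have "braket (A j) ((mat_adjoint M * M) *\<^sub>v A j') = braket (A j) (mat_adjoint M *\<^sub>v (M *\<^sub>v A j'))"
    using M A[OF j'] by (simp add: assoc_mult_mat_vec[OF mat_adjoint_carrier_mat[OF M] M])
  also have "\<dots> = braket (M *\<^sub>v A j) (M *\<^sub>v A j')"
    using M A j j' by (intro braket_mat_adjoint) auto
  also have "\<dots> = (\<Sum>i<d. cnj (braket (a i) (M *\<^sub>v A j)) * braket (a i) (M *\<^sub>v A j'))"
    using M A j j' by (intro orthonormal_basis_parseval[OF a]) auto
  also have "\<dots> = (mat_adjoint (op_matrix d a M A) * op_matrix d a M A) $$ (j, j')"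
    using index_mult_mat_sum[OF mat_adjoint_carrier_mat op_matrix_carrier_mat j j'] j j'
    by (simp add: op_matrix_carrier_mat index_op_matrix)
  finally show ?thesis by simp
qed

lemma op_matrix_mult_transpose_op_matrix:
  assumes a: "orthonormal_family d d a" and b: "orthonormal_family d d b"
    and A: "\<And>j. j < d \<Longrightarrow> A j \<in> carrier_vec nA" and B: "\<And>j. j < d \<Longrightarrow> B j \<in> carrier_vec nB"
    and E: "E \<in> carrier_mat d nA" and F: "F \<in> carrier_mat d nB"
    and EF: "kron E F *\<^sub>v max_ent nA nB d A B = c \<cdot>\<^sub>v max_ent d d d a b"
  shows "op_matrix d a E A * transpose_mat (op_matrix d b F B) = c \<cdot>\<^sub>m 1\<^sub>m d"
proof (rule eq_matI)
  fix i l assume "i < dim_row (c \<cdot>\<^sub>m 1\<^sub>m d)" and "l < dim_col (c \<cdot>\<^sub>m 1\<^sub>m d)"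
  then have i: "i < d" and l: "l < d" by auto
  then have "d \<noteq> 0" by simp
  let ?s = "complex_of_real (1 / sqrt (real d))"
  have EA: "E *\<^sub>v A j \<in> carrier_vec d" and FB: "F *\<^sub>v B j \<in> carrier_vec d" if "j < d" for j
    using E F A B that by auto
  have a_i: "a i \<in> carrier_vec d" and b_l: "b l \<in> carrier_vec d"
    using a b i l by (auto intro: orthonormal_family_carrier_vec)
  have "kron E F *\<^sub>v max_ent nA nB d A B = max_ent d d d (\<lambda>j. E *\<^sub>v A j) (\<lambda>j. F *\<^sub>v B j)"
    by (rule kron_mult_max_ent[OF E F]) (use A B in auto)
  then have "?s * (op_matrix d a E A * transpose_mat (op_matrix d b F B)) $$ (i, l) =
      braket (kron_vec (a i) (b l)) (kron E F *\<^sub>v max_ent nA nB d A B)"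
    using braket_kron_vec_max_ent[where v="\<lambda>j. E *\<^sub>v A j" and v'="\<lambda>j. F *\<^sub>v B j", OF a_i b_l EA FB]
      index_mult_mat_sum[OF op_matrix_carrier_mat transpose_carrier_mat[THEN iffD2, OF op_matrix_carrier_mat] i l] i l
    by (simp add: index_op_matrix)
  also have "\<dots> = c * braket (kron_vec (a i) (b l)) (max_ent d d d a b)"
    by (simp only: EF braket_smult_right)
  also have "\<dots> = c * (?s * (\<Sum>j<d. (if i = j then 1 else 0) * (if l = j then 1 else 0)))"
    using braket_kron_vec_max_ent[where v=a and v'=b, OF a_i b_l
        orthonormal_family_carrier_vec[OF a] orthonormal_family_carrier_vec[OF b]]
      orthonormal_family_braket[OF a i] orthonormal_family_braket[OF b l]
    by simp
  also have "\<dots> = ?s * (c \<cdot>\<^sub>m 1\<^sub>m d) $$ (i, l)"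
    using i l by (simp add: if_distrib cong: if_cong)
  finally show "(op_matrix d a E A * transpose_mat (op_matrix d b F B)) $$ (i, l) = (c \<cdot>\<^sub>m 1\<^sub>m d) $$ (i, l)"
    using \<open>d \<noteq> 0\<close> by simp
qed (auto simp: op_matrix_def)

lemma braket_kron_gram_mat_op_matrix:
  assumes a: "orthonormal_family d d a" and b: "orthonormal_family d d b"
    and E: "E \<in> carrier_mat d nA" and F: "F \<in> carrier_mat d nB"
    and A: "\<And>j. j < d \<Longrightarrow> A j \<in> carrier_vec nA" and B: "\<And>j. j < d \<Longrightarrow> B j \<in> carrier_vec nB"
    and j: "j < d" and j': "j' < d" and l: "l < d" and l': "l' < d"
  shows "braket (kron_vec (A j) (B l)) (kron (gram_mat E) (gram_mat F) *\<^sub>v kron_vec (A j') (B l')) =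
    gram_mat (op_matrix d a E A) $$ (j, j') * gram_mat (op_matrix d b F B) $$ (l, l')"
proof -
  have EE: "gram_mat E \<in> carrier_mat nA nA" and FF: "gram_mat F \<in> carrier_mat nB nB"
    using E F by (auto intro: gram_mat_carrier_mat)
  have "braket (kron_vec (A j) (B l)) (kron (gram_mat E) (gram_mat F) *\<^sub>v kron_vec (A j') (B l')) =
      braket (A j) (gram_mat E *\<^sub>v A j') * braket (B l) (gram_mat F *\<^sub>v B l')"
    unfolding kron_mult_kron_vec[OF EE FF A[OF j'] B[OF l']]
    by (rule braket_kron_vec) (use E F EE FF A B j j' l l' in auto)
  also have "\<dots> = gram_mat (op_matrix d a E A) $$ (j, j') * gram_mat (op_matrix d b F B) $$ (l, l')"
    using mat_adjoint_mult_op_matrix[OF a E A j j'] mat_adjoint_mult_op_matrix[OF b F B l l'] by simp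
  finally show ?thesis .
qed

text \<open>Coordinate form of \<open>\<Sum>\<^sub>k M\<^sub>k\<^sup>\<dagger>M\<^sub>k \<otimes> N\<^sub>k\<^sup>\<dagger>N\<^sub>k = \<one>\<close>.\<close>

definition gram_tensor_complete :: "'k set \<Rightarrow> nat \<Rightarrow> ('k \<Rightarrow> complex mat) \<Rightarrow> ('k \<Rightarrow> complex mat) \<Rightarrow> bool" where
  "gram_tensor_complete K d M N \<longleftrightarrow> (\<forall>j<d. \<forall>j'<d. \<forall>l<d. \<forall>l'<d.
     (\<Sum>k\<in>K. gram_mat (M k) $$ (j, j') * gram_mat (N k) $$ (l, l')) =
     (if j = j' then 1 else 0) * (if l = l' then 1 else 0))"

lemma gram_tensor_completeD:
  "gram_tensor_complete K d M N \<Longrightarrow> j < d \<Longrightarrow> j' < d \<Longrightarrow> l < d \<Longrightarrow> l' < d \<Longrightarrow>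
    (\<Sum>k\<in>K. gram_mat (M k) $$ (j, j') * gram_mat (N k) $$ (l, l')) =
    (if j = j' then 1 else 0) * (if l = l' then 1 else 0)"
  unfolding gram_tensor_complete_def by blast

lemma op_matrix_gram_completeness:
  assumes A: "orthonormal_family nA d A" and B: "orthonormal_family nB d B"
    and a: "orthonormal_family d d a" and b: "orthonormal_family d d b"
    and "finite K"
    and E: "\<And>k. k \<in> K \<Longrightarrow> E k \<in> carrier_mat d nA"
    and F: "\<And>k. k \<in> K \<Longrightarrow> F k \<in> carrier_mat d nB"
    and complete: "mat (nA * nB) (nA * nB) (\<lambda>(r, c). \<Sum>k\<in>K.
        kron (gram_mat (E k)) (gram_mat (F k)) $$ (r, c)) = 1\<^sub>m (nA * nB)"
  shows "gram_tensor_complete K d (\<lambda>k. op_matrix d a (E k) A) (\<lambda>k. op_matrix d b (F k) B)"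
  unfolding gram_tensor_complete_def
proof (intro allI impI)
  fix j j' l l' assume j: "j < d" and j': "j' < d" and l: "l < d" and l': "l' < d"
  have A_j: "A i \<in> carrier_vec nA" and B_j: "B i \<in> carrier_vec nB" if "i < d" for i
    using A B that by (auto intro: orthonormal_family_carrier_vec)
  define x where "x = kron_vec (A j) (B l)"
  define x' where "x' = kron_vec (A j') (B l')"
  have x: "x \<in> carrier_vec (nA * nB)" and x': "x' \<in> carrier_vec (nA * nB)"
    unfolding x_def x'_def using A_j B_j j j' l l' by (auto intro: kron_vec_carrier_vec)
  have "(if j = j' then 1 else 0) * (if l = l' then 1 else 0) = braket x x'"
    unfolding x_def x'_def
    using braket_kron_vec[OF A_j[OF j] A_j[OF j'] B_j[OF l] B_j[OF l']]
      orthonormal_family_braket[OF A j j'] orthonormal_family_braket[OF B l l'] by simp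
  also have "\<dots> = braket x (1\<^sub>m (nA * nB) *\<^sub>v x')" using x' by simp
  also have "\<dots> = (\<Sum>k\<in>K. braket x (kron (gram_mat (E k)) (gram_mat (F k)) *\<^sub>v x'))"
    unfolding complete[symmetric] using E F x x'
    by (intro braket_mat_sum \<open>finite K\<close> kron_carrier_mat gram_mat_carrier_mat) auto
  also have "\<dots> = (\<Sum>k\<in>K. gram_mat (op_matrix d a (E k) A) $$ (j, j') * gram_mat (op_matrix d b (F k) B) $$ (l, l'))"
  proof (rule sum.cong[OF refl])
    fix k assume "k \<in> K"
    show "braket x (kron (gram_mat (E k)) (gram_mat (F k)) *\<^sub>v x') =
        gram_mat (op_matrix d a (E k) A) $$ (j, j') * gram_mat (op_matrix d b (F k) B) $$ (l, l')"
      unfolding x_def x'_def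
      by (rule braket_kron_gram_mat_op_matrix[OF a b E[OF \<open>k \<in> K\<close>] F[OF \<open>k \<in> K\<close>] A_j B_j j j' l l'])
  qed
  finally show "(\<Sum>k\<in>K. gram_mat (op_matrix d a (E k) A) $$ (j, j') * gram_mat (op_matrix d b (F k) B) $$ (l, l')) =
      (if j = j' then 1 else 0) * (if l = l' then 1 else 0)"
    by simp
qed

section \<open>Cauchy--Schwarz inequality for complex sums\<close>

lemma cnj_mult_self: "cnj z * z = (complex_of_real (cmod z))\<^sup>2"
  using complex_norm_square[of z] by (simp add: mult.commute)

lemma sum_cmod_cnj_diff_power2:
  "(\<Sum>s\<in>S. (cmod (cnj (g s) - c * f s))\<^sup>2) =
    (\<Sum>s\<in>S. (cmod (g s))\<^sup>2) - 2 * Re (c * (\<Sum>s\<in>S. f s * g s)) + (cmod c)\<^sup>2 * (\<Sum>s\<in>S. (cmod (f s))\<^sup>2)"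
proof -
  have "(cmod (cnj (g s) - c * f s))\<^sup>2 =
      (cmod (g s))\<^sup>2 - 2 * Re (c * (f s * g s)) + (cmod c)\<^sup>2 * (cmod (f s))\<^sup>2" for s
    unfolding cmod_power2 by (simp add: power2_eq_square algebra_simps)
  then show ?thesis
    by (simp add: sum.distrib sum_subtractf sum_distrib_left Re_sum)
qed

text \<open>The residual of the best approximation of \<open>cnj \<circ> g\<close> by a multiple of \<open>f\<close>: its
  nonnegativity is the Cauchy--Schwarz inequality and its vanishing is the equality case.\<close>

lemma complex_Cauchy_Schwarz_residual:
  fixes S :: "'a set" and f g :: "'a \<Rightarrow> complex"
  defines "z \<equiv> \<Sum>s\<in>S. f s * g s" and "SF \<equiv> \<Sum>s\<in>S. (cmod (f s))\<^sup>2" and "SG \<equiv> \<Sum>s\<in>S. (cmod (g s))\<^sup>2"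
  assumes "SF \<noteq> 0"
  shows "(\<Sum>s\<in>S. (cmod (cnj (g s) - cnj z / of_real SF * f s))\<^sup>2) = SG - (cmod z)\<^sup>2 / SF"
proof -
  have "cnj z / of_real SF * z = of_real ((cmod z)\<^sup>2) / of_real SF"
    by (simp only: times_divide_eq_left cnj_mult_self of_real_power)
  then have Re: "Re (cnj z / of_real SF * z) = (cmod z)\<^sup>2 / SF"
    by (simp only: flip: of_real_divide) simp
  have norm: "(cmod (cnj z / of_real SF))\<^sup>2 * SF = (cmod z)\<^sup>2 / SF"
    using assms(4) by (simp add: norm_divide power_divide power2_eq_square field_simps)
  show ?thesis
    unfolding sum_cmod_cnj_diff_power2 z_def[symmetric] SF_def[symmetric] SG_def[symmetric] Re norm
    by simp
qed

lemma complex_Cauchy_Schwarz_sum: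
  fixes f g :: "'a \<Rightarrow> complex"
  assumes "finite S"
  shows "(cmod (\<Sum>s\<in>S. f s * g s))\<^sup>2 \<le> (\<Sum>s\<in>S. (cmod (f s))\<^sup>2) * (\<Sum>s\<in>S. (cmod (g s))\<^sup>2)"
proof (cases "(\<Sum>s\<in>S. (cmod (f s))\<^sup>2) = 0")
  case True
  then have "\<forall>s\<in>S. f s = 0" using assms by (simp add: sum_nonneg_eq_0_iff)
  then show ?thesis by simp
next
  case False
  then have pos: "(\<Sum>s\<in>S. (cmod (f s))\<^sup>2) > 0" by (simp add: order_le_neq_trans sum_nonneg)
  have "0 \<le> (\<Sum>s\<in>S. (cmod (g s))\<^sup>2) - (cmod (\<Sum>s\<in>S. f s * g s))\<^sup>2 / (\<Sum>s\<in>S. (cmod (f s))\<^sup>2)"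
    unfolding complex_Cauchy_Schwarz_residual[OF False, symmetric] by (simp add: sum_nonneg)
  then show ?thesis using pos by (simp add: field_simps mult.commute)
qed

lemma complex_Cauchy_Schwarz_sum_eq:
  fixes f g :: "'a \<Rightarrow> complex"
  assumes "finite S"
    and eq: "(cmod (\<Sum>s\<in>S. f s * g s))\<^sup>2 = (\<Sum>s\<in>S. (cmod (f s))\<^sup>2) * (\<Sum>s\<in>S. (cmod (g s))\<^sup>2)"
    and nz: "(\<Sum>s\<in>S. (cmod (f s))\<^sup>2) \<noteq> 0"
    and "s \<in> S"
  shows "cnj (g s) = cnj (\<Sum>s\<in>S. f s * g s) / of_real (\<Sum>s\<in>S. (cmod (f s))\<^sup>2) * f s"
proof -
  define c where "c = cnj (\<Sum>s\<in>S. f s * g s) / of_real (\<Sum>s\<in>S. (cmod (f s))\<^sup>2)"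
  have "(\<Sum>x\<in>S. (cmod (cnj (g x) - c * f x))\<^sup>2) =
      (\<Sum>s\<in>S. (cmod (g s))\<^sup>2) - (cmod (\<Sum>s\<in>S. f s * g s))\<^sup>2 / (\<Sum>s\<in>S. (cmod (f s))\<^sup>2)"
    unfolding c_def by (rule complex_Cauchy_Schwarz_residual[OF nz])
  also have "\<dots> = 0"
    unfolding eq using nz by (metis diff_self nonzero_mult_div_cancel_left)
  finally have "\<forall>x\<in>S. (cmod (cnj (g x) - c * f x))\<^sup>2 = 0"
    using sum_nonneg_eq_0_iff[OF \<open>finite S\<close>, of "\<lambda>x. (cmod (cnj (g x) - c * f x))\<^sup>2"] by simp
  then have "cnj (g s) - c * f s = 0" using \<open>s \<in> S\<close> by simp
  then show ?thesis unfolding c_def by (rule right_minus_eq[THEN iffD1])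
qed

section \<open>Frobenius norm estimates\<close>

definition frobenius_sq :: "complex mat \<Rightarrow> real" where
  "frobenius_sq M = (\<Sum>i<dim_row M. \<Sum>j<dim_col M. (cmod (M $$ (i, j)))\<^sup>2)"

lemma frobenius_sq_cartesian:
  "frobenius_sq M = (\<Sum>(i, j)\<in>{..<dim_row M} \<times> {..<dim_col M}. (cmod (M $$ (i, j)))\<^sup>2)"
  unfolding frobenius_sq_def by (simp add: sum.cartesian_product)

lemma frobenius_sq_smult_one: "frobenius_sq (of_real s \<cdot>\<^sub>m 1\<^sub>m d) = real d * s\<^sup>2"
proof -
  have "frobenius_sq (of_real s \<cdot>\<^sub>m 1\<^sub>m d) = (\<Sum>i<d. \<Sum>j<d. if j = i then s\<^sup>2 else 0)"
    unfolding frobenius_sq_def by (intro sum.cong) auto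
  then show ?thesis by simp
qed

lemma index_gram_mat:
  assumes M: "M \<in> carrier_mat n m" and "j < m" and "j' < m"
  shows "gram_mat M $$ (j, j') = (\<Sum>i<n. cnj (M $$ (i, j)) * M $$ (i, j'))"
  using index_mult_mat_sum[OF mat_adjoint_carrier_mat[OF M] M assms(2,3)] M assms(2)
  by (simp del: index_mult_mat)

lemma diag_gram_mat:
  assumes "M \<in> carrier_mat n m" and "j < m"
  shows "gram_mat M $$ (j, j) = of_real (\<Sum>i<n. (cmod (M $$ (i, j)))\<^sup>2)"
  using index_gram_mat[OF assms(1,2,2)] by (simp add: cnj_mult_self del: index_mult_mat)

lemma sum_diag_gram_mat_products:
  assumes M: "M \<in> carrier_mat n m" and N: "N \<in> carrier_mat q r"
  shows "(\<Sum>j<m. \<Sum>l<r. gram_mat M $$ (j, j) * gram_mat N $$ (l, l)) =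
    of_real (frobenius_sq M * frobenius_sq N)"
proof -
  have "frobenius_sq M = (\<Sum>j<m. \<Sum>i<n. (cmod (M $$ (i, j)))\<^sup>2)"
    using M unfolding frobenius_sq_def by (simp add: sum.swap[of _ "{..<n}"])
  moreover have "frobenius_sq N = (\<Sum>l<r. \<Sum>i<q. (cmod (N $$ (i, l)))\<^sup>2)"
    using N unfolding frobenius_sq_def by (simp add: sum.swap[of _ "{..<q}"])
  moreover have "(\<Sum>j<m. \<Sum>l<r. gram_mat M $$ (j, j) * gram_mat N $$ (l, l)) =
      of_real ((\<Sum>j<m. \<Sum>i<n. (cmod (M $$ (i, j)))\<^sup>2) * (\<Sum>l<r. \<Sum>i<q. (cmod (N $$ (i, l)))\<^sup>2))"
    using diag_gram_mat[OF M] diag_gram_mat[OF N] by (simp add: sum_product del: index_mult_mat)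
  ultimately show ?thesis by simp
qed

lemma sum_gram_mat_products:
  assumes M: "M \<in> carrier_mat n m" and N: "N \<in> carrier_mat n m"
  shows "(\<Sum>j<m. \<Sum>j'<m. gram_mat M $$ (j, j') * gram_mat N $$ (j, j')) =
    of_real (frobenius_sq (M * transpose_mat N))"
proof -
  have "(\<Sum>j<m. \<Sum>j'<m. gram_mat M $$ (j, j') * gram_mat N $$ (j, j')) =
      (\<Sum>j<m. \<Sum>j'<m. \<Sum>i<n. \<Sum>l<n. cnj (M $$ (i, j) * N $$ (l, j)) * (M $$ (i, j') * N $$ (l, j')))"
    using M N by (intro sum.cong refl)
      (simp add: index_gram_mat[OF M] index_gram_mat[OF N] sum_product mult_ac del: index_mult_mat)
  also have "\<dots> = (\<Sum>j<m. \<Sum>i<n. \<Sum>j'<m. \<Sum>l<n. cnj (M $$ (i, j) * N $$ (l, j)) * (M $$ (i, j') * N $$ (l, j')))"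
    by (intro sum.cong refl sum.swap)
  also have "\<dots> = (\<Sum>j<m. \<Sum>i<n. \<Sum>l<n. \<Sum>j'<m. cnj (M $$ (i, j) * N $$ (l, j)) * (M $$ (i, j') * N $$ (l, j')))"
    by (intro sum.cong refl sum.swap)
  also have "\<dots> = (\<Sum>i<n. \<Sum>j<m. \<Sum>l<n. \<Sum>j'<m. cnj (M $$ (i, j) * N $$ (l, j)) * (M $$ (i, j') * N $$ (l, j')))"
    by (rule sum.swap)
  also have "\<dots> = (\<Sum>i<n. \<Sum>l<n. \<Sum>j<m. \<Sum>j'<m. cnj (M $$ (i, j) * N $$ (l, j)) * (M $$ (i, j') * N $$ (l, j')))"
    by (intro sum.cong refl sum.swap)
  also have "\<dots> = (\<Sum>i<n. \<Sum>l<n. cnj ((M * transpose_mat N) $$ (i, l)) * (M * transpose_mat N) $$ (i, l))"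
    using M N by (intro sum.cong refl)
      (simp add: index_mult_mat_sum[of _ n m _ n] sum_product del: index_mult_mat)
  also have "\<dots> = of_real (frobenius_sq (M * transpose_mat N))"
    using M N by (simp add: frobenius_sq_def cnj_mult_self)
  finally show ?thesis .
qed

lemma sum_entry_products:
  assumes M: "M \<in> carrier_mat n m" and N: "N \<in> carrier_mat n m"
  shows "(\<Sum>(i, j)\<in>{..<n} \<times> {..<m}. M $$ (i, j) * N $$ (i, j)) = (\<Sum>i<n. (M * transpose_mat N) $$ (i, i))"
proof -
  have "(\<Sum>i<n. (M * transpose_mat N) $$ (i, i)) = (\<Sum>i<n. \<Sum>j<m. M $$ (i, j) * N $$ (i, j))"
    using M N by (intro sum.cong refl) (simp add: index_mult_mat_sum[of _ n m _ n] del: index_mult_mat)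
  then show ?thesis by (simp add: sum.cartesian_product)
qed

lemma sum_entry_products_smult_one:
  assumes M: "M \<in> carrier_mat d d" and N: "N \<in> carrier_mat d d"
    and MN: "M * transpose_mat N = of_real s \<cdot>\<^sub>m 1\<^sub>m d"
  shows "(\<Sum>(i, j)\<in>{..<d} \<times> {..<d}. M $$ (i, j) * N $$ (i, j)) = of_real (real d * s)"
  unfolding sum_entry_products[OF M N] MN by simp

lemma frobenius_sq_product_lower_bound:
  assumes M: "M \<in> carrier_mat d d" and N: "N \<in> carrier_mat d d"
    and MN: "M * transpose_mat N = of_real s \<cdot>\<^sub>m 1\<^sub>m d"
  shows "(real d * s)\<^sup>2 \<le> frobenius_sq M * frobenius_sq N"
  using complex_Cauchy_Schwarz_sum[of "{..<d} \<times> {..<d}" "\<lambda>(i, j). M $$ (i, j)" "\<lambda>(i, j). N $$ (i, j)"]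
    sum_entry_products_smult_one[OF M N MN] M N
  by (simp add: frobenius_sq_cartesian case_prod_beta' norm_mult power_mult_distrib)

lemma conj_proportional_if_frobenius_tight:
  assumes M: "M \<in> carrier_mat d d" and N: "N \<in> carrier_mat d d"
    and MN: "M * transpose_mat N = of_real s \<cdot>\<^sub>m 1\<^sub>m d" and "s > 0"
    and tight: "frobenius_sq M * frobenius_sq N = (real d * s)\<^sup>2"
  shows "\<exists>c > 0. map_mat cnj N = of_real c \<cdot>\<^sub>m M"
proof (cases "frobenius_sq M = 0")
  case True
  then have "d = 0" using tight \<open>s > 0\<close> by simp
  then show ?thesis using M N by (intro exI[of _ 1]) auto
next
  case False
  let ?S = "{..<d} \<times> {..<d}"
  have z: "(\<Sum>x\<in>?S. M $$ x * N $$ x) = of_real (real d * s)"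
    using sum_entry_products_smult_one[OF M N MN] by simp
  have SF: "(\<Sum>x\<in>?S. (cmod (M $$ x))\<^sup>2) = frobenius_sq M"
    using M by (simp add: frobenius_sq_cartesian)
  have SN: "(\<Sum>x\<in>?S. (cmod (N $$ x))\<^sup>2) = frobenius_sq N"
    using N by (simp add: frobenius_sq_cartesian)
  have eq: "(cmod (\<Sum>x\<in>?S. M $$ x * N $$ x))\<^sup>2 =
      (\<Sum>x\<in>?S. (cmod (M $$ x))\<^sup>2) * (\<Sum>x\<in>?S. (cmod (N $$ x))\<^sup>2)"
    unfolding z SF SN tight by (simp add: norm_mult power_mult_distrib)
  have "d \<noteq> 0" using False M unfolding frobenius_sq_def by (cases "d = 0") auto
  then have c: "real d * s / frobenius_sq M > 0"
    using False \<open>s > 0\<close> by (simp add: frobenius_sq_def sum_nonneg order_le_neq_trans)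
  have "cnj (N $$ (i, j)) = of_real (real d * s / frobenius_sq M) * M $$ (i, j)" if "i < d" "j < d" for i j
  proof -
    have "cnj (N $$ (i, j)) =
        cnj (\<Sum>x\<in>?S. M $$ x * N $$ x) / of_real (\<Sum>x\<in>?S. (cmod (M $$ x))\<^sup>2) * M $$ (i, j)"
      by (rule complex_Cauchy_Schwarz_sum_eq[of ?S "\<lambda>x. M $$ x" "\<lambda>x. N $$ x" "(i, j)"])
        (use eq False SF that in auto)
    then show ?thesis unfolding z SF by simp
  qed
  then show ?thesis using c M N by (intro exI[of _ "real d * s / frobenius_sq M"]) (auto intro!: eq_matI)
qed

lemma mat_mult_mat_adjoint_if_conj_proportional:
  assumes M: "M \<in> carrier_mat d d" and N: "N \<in> carrier_mat d d"
    and MN: "M * transpose_mat N = of_real s \<cdot>\<^sub>m 1\<^sub>m d"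
    and "c \<noteq> 0" and NM: "map_mat cnj N = of_real c \<cdot>\<^sub>m M"
  shows "M * mat_adjoint M = of_real (s / c) \<cdot>\<^sub>m 1\<^sub>m d"
proof (rule eq_matI)
  fix i l assume "i < dim_row (of_real (s / c) \<cdot>\<^sub>m 1\<^sub>m d)" and "l < dim_col (of_real (s / c) \<cdot>\<^sub>m 1\<^sub>m d)"
  then have i: "i < d" and l: "l < d" by auto
  have N_lj: "N $$ (l, j) = of_real c * cnj (M $$ (l, j))" if "j < d" for j
    using arg_cong[OF NM, of "\<lambda>X. cnj (X $$ (l, j))"] that l M N by simp
  have "of_real c * (M * mat_adjoint M) $$ (i, l) = (M * transpose_mat N) $$ (i, l)"
    using index_mult_mat_sum[OF M mat_adjoint_carrier_mat[OF M] i l]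
      index_mult_mat_sum[OF M _ i l, of "transpose_mat N"] M N i l
    by (simp add: N_lj sum_distrib_left mult_ac del: index_mult_mat)
  also have "\<dots> = of_real c * (of_real (s / c) \<cdot>\<^sub>m 1\<^sub>m d) $$ (i, l)"
    using MN \<open>c \<noteq> 0\<close> i l by (cases "i = l") simp_all
  finally show "(M * mat_adjoint M) $$ (i, l) = (of_real (s / c) \<cdot>\<^sub>m 1\<^sub>m d) $$ (i, l)"
    using \<open>c \<noteq> 0\<close> by simp
qed (use M in auto)

lemma unitary_mat_if_mult_mat_adjoint:
  assumes U: "U \<in> carrier_mat d d" and "U * mat_adjoint U = 1\<^sub>m d"
  shows "unitary_mat d U"
  unfolding unitary_mat_def
  using assms mat_mult_left_right_inverse[OF U mat_adjoint_carrier_mat[OF U]] by blast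

lemma scaled_unitary_if_conj_proportional:
  assumes M: "M \<in> carrier_mat d d" and N: "N \<in> carrier_mat d d"
    and MN: "M * transpose_mat N = of_real s \<cdot>\<^sub>m 1\<^sub>m d" and "s > 0"
    and "c > 0" and NM: "map_mat cnj N = of_real c \<cdot>\<^sub>m M"
  shows "\<exists>\<alpha> > 0. \<exists>U. unitary_mat d U \<and> M = of_real \<alpha> \<cdot>\<^sub>m U \<and> N = of_real (s / \<alpha>) \<cdot>\<^sub>m map_mat cnj U"
proof -
  have MM: "M * mat_adjoint M = of_real (s / c) \<cdot>\<^sub>m 1\<^sub>m d"
    using \<open>c > 0\<close> by (intro mat_mult_mat_adjoint_if_conj_proportional[OF M N MN _ NM]) simp
  define \<alpha> where "\<alpha> = sqrt (s / c)"
  have "\<alpha> > 0" and \<alpha>2: "\<alpha> * \<alpha> = s / c"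
    using \<open>s > 0\<close> \<open>c > 0\<close> by (auto simp: \<alpha>_def)
  define U where "U = of_real (1 / \<alpha>) \<cdot>\<^sub>m M"
  have U: "U \<in> carrier_mat d d" using M by (simp add: U_def)
  have "U * mat_adjoint U = 1\<^sub>m d"
  proof (rule eq_matI)
    fix i l assume "i < dim_row (1\<^sub>m d)" and "l < dim_col (1\<^sub>m d)"
    then have i: "i < d" and l: "l < d" by auto
    have "(U * mat_adjoint U) $$ (i, l) = (M * mat_adjoint M) $$ (i, l) / of_real (\<alpha> * \<alpha>)"
      using index_mult_mat_sum[OF U mat_adjoint_carrier_mat[OF U] i l]
        index_mult_mat_sum[OF M mat_adjoint_carrier_mat[OF M] i l] M U i l
      by (simp add: U_def sum_divide_distrib del: index_mult_mat)
    then show "(U * mat_adjoint U) $$ (i, l) = 1\<^sub>m d $$ (i, l)"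
      using MM \<alpha>2 \<open>s > 0\<close> \<open>c > 0\<close> i l by simp
  qed (use U in auto)
  moreover have "M = of_real \<alpha> \<cdot>\<^sub>m U"
    using M \<open>\<alpha> > 0\<close> by (auto simp: U_def intro!: eq_matI)
  moreover have "N = of_real (s / \<alpha>) \<cdot>\<^sub>m map_mat cnj U"
  proof -
    have "N $$ (i, j) = of_real c * cnj (M $$ (i, j))" if "i < d" "j < d" for i j
      using arg_cong[OF NM, of "\<lambda>X. cnj (X $$ (i, j))"] that M N by simp
    moreover have "c = s / (\<alpha> * \<alpha>)"
      using \<alpha>2 \<open>\<alpha> > 0\<close> \<open>c > 0\<close> by (simp add: field_simps)
    ultimately show ?thesis
      using M N \<open>\<alpha> > 0\<close> by (auto simp: U_def intro!: eq_matI simp flip: of_real_mult)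
  qed
  ultimately show ?thesis
    using U \<open>\<alpha> > 0\<close> unitary_mat_if_mult_mat_adjoint by blast
qed

lemma sum_weights_if_gram_tensor_complete:
  assumes M: "\<And>k. k \<in> K \<Longrightarrow> M k \<in> carrier_mat d d" and N: "\<And>k. k \<in> K \<Longrightarrow> N k \<in> carrier_mat d d"
    and p: "\<And>k. k \<in> K \<Longrightarrow> p k \<ge> 0"
    and MN: "\<And>k. k \<in> K \<Longrightarrow> M k * transpose_mat (N k) = of_real (sqrt (p k)) \<cdot>\<^sub>m 1\<^sub>m d"
    and complete: "gram_tensor_complete K d M N"
  shows "(\<Sum>k\<in>K. real d * p k) = real d"
proof -
  have "of_nat d = (\<Sum>j<d. \<Sum>j'<d. \<Sum>k\<in>K. gram_mat (M k) $$ (j, j') * gram_mat (N k) $$ (j, j'))"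
    by (simp add: gram_tensor_completeD[OF complete] if_distrib cong: if_cong)
  also have "\<dots> = (\<Sum>k\<in>K. \<Sum>j<d. \<Sum>j'<d. gram_mat (M k) $$ (j, j') * gram_mat (N k) $$ (j, j'))"
    by (simp only: sum.swap[where B = K])
  also have "\<dots> = (\<Sum>k\<in>K. of_real (real d * p k))"
  proof (rule sum.cong[OF refl])
    fix k assume k: "k \<in> K"
    show "(\<Sum>j<d. \<Sum>j'<d. gram_mat (M k) $$ (j, j') * gram_mat (N k) $$ (j, j')) = of_real (real d * p k)"
      using sum_gram_mat_products[OF M[OF k] N[OF k]] MN[OF k] p[OF k] by (simp add: frobenius_sq_smult_one)
  qed
  finally show ?thesis
    by (metis of_real_eq_iff of_real_of_nat_eq of_real_sum)
qed

lemma sum_frobenius_sq_products_if_gram_tensor_complete: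
  assumes M: "\<And>k. k \<in> K \<Longrightarrow> M k \<in> carrier_mat d d" and N: "\<And>k. k \<in> K \<Longrightarrow> N k \<in> carrier_mat d d"
    and complete: "gram_tensor_complete K d M N"
  shows "(\<Sum>k\<in>K. frobenius_sq (M k) * frobenius_sq (N k)) = real d * real d"
proof -
  have "of_nat (d * d) = (\<Sum>j<d. \<Sum>l<d. \<Sum>k\<in>K. gram_mat (M k) $$ (j, j) * gram_mat (N k) $$ (l, l))"
    by (simp add: gram_tensor_completeD[OF complete])
  also have "\<dots> = (\<Sum>k\<in>K. \<Sum>j<d. \<Sum>l<d. gram_mat (M k) $$ (j, j) * gram_mat (N k) $$ (l, l))"
    by (simp only: sum.swap[where B = K])
  also have "\<dots> = (\<Sum>k\<in>K. of_real (frobenius_sq (M k) * frobenius_sq (N k)))"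
    using sum_diag_gram_mat_products[OF M N] by simp
  finally show ?thesis
    by (metis of_real_eq_iff of_real_of_nat_eq of_real_sum of_nat_mult)
qed

lemma frobenius_sq_products_tight:
  assumes "finite K"
    and M: "\<And>k. k \<in> K \<Longrightarrow> M k \<in> carrier_mat d d" and N: "\<And>k. k \<in> K \<Longrightarrow> N k \<in> carrier_mat d d"
    and p: "\<And>k. k \<in> K \<Longrightarrow> p k \<ge> 0"
    and MN: "\<And>k. k \<in> K \<Longrightarrow> M k * transpose_mat (N k) = of_real (sqrt (p k)) \<cdot>\<^sub>m 1\<^sub>m d"
    and complete: "gram_tensor_complete K d M N"
    and "k \<in> K"
  shows "frobenius_sq (M k) * frobenius_sq (N k) = (real d * sqrt (p k))\<^sup>2"
proof -
  have "(\<Sum>k\<in>K. (real d * sqrt (p k))\<^sup>2) = (\<Sum>k\<in>K. real d * (real d * p k))"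
    using p by (intro sum.cong refl) (simp add: power_mult_distrib power2_eq_square)
  also have "\<dots> = (\<Sum>k\<in>K. frobenius_sq (M k) * frobenius_sq (N k))"
    using sum_weights_if_gram_tensor_complete[OF M N p MN complete]
      sum_frobenius_sq_products_if_gram_tensor_complete[OF M N complete]
    by (simp add: sum_distrib_left[symmetric])
  finally have "(\<Sum>k\<in>K. frobenius_sq (M k) * frobenius_sq (N k) - (real d * sqrt (p k))\<^sup>2) = 0"
    by (simp add: sum_subtractf)
  moreover have "\<forall>k\<in>K. (real d * sqrt (p k))\<^sup>2 \<le> frobenius_sq (M k) * frobenius_sq (N k)"
    using M N MN frobenius_sq_product_lower_bound by blast
  ultimately show ?thesis
    using \<open>finite K\<close> \<open>k \<in> K\<close> by (simp add: sum_nonneg_eq_0_iff)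
qed

theorem mainTheorem9:
  fixes nA nB d :: nat
    and A B a b :: "nat \<Rightarrow> complex vec"
    and K :: "'k set"
    and E F :: "'k \<Rightarrow> complex mat"
    and p :: "'k \<Rightarrow> real"
  assumes "nA \<ge> d" and "nB \<ge> d"
    and "orthonormal_family nA d A" and "orthonormal_family nB d B"
    and "orthonormal_family d d a" and "orthonormal_family d d b"
    and "finite K"
    and "\<And>k. k \<in> K \<Longrightarrow> E k \<in> carrier_mat d nA"
    and "\<And>k. k \<in> K \<Longrightarrow> F k \<in> carrier_mat d nB"
    and "\<And>k. k \<in> K \<Longrightarrow> p k \<ge> 0"
    and "mat (nA * nB) (nA * nB) (\<lambda>(r, c). \<Sum>k\<in>K.
            kron (mat_adjoint (E k) * E k) (mat_adjoint (F k) * F k) $$ (r, c)) = 1\<^sub>m (nA * nB)"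
    and "\<And>k. k \<in> K \<Longrightarrow> kron (E k) (F k) *\<^sub>v max_ent nA nB d A B
            = complex_of_real (sqrt (p k)) \<cdot>\<^sub>v max_ent d d d a b"
  shows "\<forall>k\<in>K. p k \<noteq> 0 \<longrightarrow> (\<exists>\<alpha>::real. \<alpha> > 0 \<and> (\<exists>U. unitary_mat d U \<and>
            op_matrix d a (E k) A = complex_of_real \<alpha> \<cdot>\<^sub>m U \<and>
            op_matrix d b (F k) B = complex_of_real (sqrt (p k) / \<alpha>) \<cdot>\<^sub>m map_mat cnj U))"
proof (intro ballI impI)
  fix k assume "k \<in> K" and "p k \<noteq> 0"
  define M where "M = (\<lambda>k. op_matrix d a (E k) A)"
  define N where "N = (\<lambda>k. op_matrix d b (F k) B)"
  have carrier: "M k \<in> carrier_mat d d" "N k \<in> carrier_mat d d" for k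
    unfolding M_def N_def by (simp_all add: op_matrix_carrier_mat)
  have MN: "M k * transpose_mat (N k) = of_real (sqrt (p k)) \<cdot>\<^sub>m 1\<^sub>m d" if "k \<in> K" for k
    unfolding M_def N_def using assms(3-6,8,9,12) that
    by (intro op_matrix_mult_transpose_op_matrix) (auto intro: orthonormal_family_carrier_vec)
  have "gram_tensor_complete K d M N"
    unfolding M_def N_def by (rule op_matrix_gram_completeness[OF assms(3-9,11)])
  then have tight: "frobenius_sq (M k) * frobenius_sq (N k) = (real d * sqrt (p k))\<^sup>2"
    using assms(7,10) carrier MN \<open>k \<in> K\<close>
    by (intro frobenius_sq_products_tight[where M=M and N=N and p=p]) auto
  have "sqrt (p k) > 0" using assms(10) \<open>k \<in> K\<close> \<open>p k \<noteq> 0\<close> by (simp add: order_le_neq_trans)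
  moreover obtain c where "c > 0" and "map_mat cnj (N k) = of_real c \<cdot>\<^sub>m M k"
    using conj_proportional_if_frobenius_tight[OF carrier MN[OF \<open>k \<in> K\<close>] \<open>sqrt (p k) > 0\<close> tight]
    by blast
  ultimately show "\<exists>\<alpha>::real. \<alpha> > 0 \<and> (\<exists>U. unitary_mat d U \<and>
      op_matrix d a (E k) A = complex_of_real \<alpha> \<cdot>\<^sub>m U \<and>
      op_matrix d b (F k) B = complex_of_real (sqrt (p k) / \<alpha>) \<cdot>\<^sub>m map_mat cnj U)"
    using scaled_unitary_if_conj_proportional[OF carrier MN[OF \<open>k \<in> K\<close>]]
    unfolding M_def N_def by auto
qed

end
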